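(* Let $f:X\to Y$ be a local homeomorphism between metric spaces, where $X$ is complete and $Y$ is path-connected and locally $\mathcal R$-contractible. If there exists $\alpha>0$ such that $D_x^-f\ge\alpha$ for all $x\in X$, then $f$ is a covering projection.
   Context: A path $p:[0,1]\to Y$ is rectifiable if its length $\sup\sum_i d(p(t_i),p(t_{i+1}))$ (over partitions of $[0,1]$) is finite. $Y$ is locally $\mathcal R$-contractible if every $y_0\in Y$ has an open neighborhood $U$ with a continuous homotopy $H:U\times[0,1]\to U$ such that $H(y_0,t)=y_0$ for all $t$, $H(y,0)=y_0$, $H(y,1)=y$ for all $y\in U$, and each path $t\mapsto H(y,t)$ is rectifiable. For non-isolated $x\in X$, $D_x^-f=\liminf_{z\to x,\,z\neq x}\frac{d(f(z),f(x))}{d(z,x)}$; $X$ is assumed to have no isolated points. *)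

theory Defs
  imports "HOL-Analysis.Analysis"
begin

definition local_homeomorphism :: "('a::topological_space \<Rightarrow> 'b::topological_space) \<Rightarrow> bool" where
  "local_homeomorphism f \<longleftrightarrow>
     (\<forall>x. \<exists>U V g. x \<in> U \<and> open U \<and> open V \<and> homeomorphism U V f g)"

definition rectifiable_path :: "(real \<Rightarrow> 'a::metric_space) \<Rightarrow> bool" where
  "rectifiable_path p \<longleftrightarrow>
     bdd_above {(\<Sum>i<n. dist (p (t i)) (p (t (Suc i)))) | t n.
                  t 0 = 0 \<and> t n = 1 \<and> (\<forall>i<n. t i \<le> t (Suc i))}"

definition locally_R_contractible :: "'a::metric_space set \<Rightarrow> bool" where
  "locally_R_contractible Y \<longleftrightarrow>
     (\<forall>y0\<in>Y. \<exists>U H. openin (top_of_set Y) U \<and> y0 \<in> U \<and>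
        continuous_on (U \<times> {0..1::real}) H \<and> H ` (U \<times> {0..1}) \<subseteq> U \<and>
        (\<forall>t\<in>{0..1}. H (y0, t) = y0) \<and>
        (\<forall>y\<in>U. H (y, 0) = y0 \<and> H (y, 1) = y) \<and>
        (\<forall>y\<in>U. rectifiable_path (\<lambda>t. H (y, t))))"

definition lower_scalar_deriv :: "('a::metric_space \<Rightarrow> 'b::metric_space) \<Rightarrow> 'a \<Rightarrow> ereal" where
  "lower_scalar_deriv f x = Liminf (at x) (\<lambda>z. ereal (dist (f z) (f x) / dist z x))"

end

theory Submission
  imports Defs
begin

text \<open>A lower bound \<alpha> on the lower scalar derivative makes f locally expanding by any factor
  \<beta> < \<alpha>, so a lift c of a rectifiable path \<gamma> satisfies
  \<beta> d(c s, c t) \<le> V(t) - V(s), V being the variation of \<gamma>. Hence a lift defined on [0, T)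
  is Cauchy as t \<rightarrow> T and, X being complete, extends to [0, T]; as f is a local
  homeomorphism, rectifiable paths therefore lift. If H is a rectifiable contraction of a
  neighbourhood U of y0, then for every x0 over y0 the endpoints of the lifts of H(y, -) starting
  at x0 form a continuous section of f over U; lifting reversed paths shows that these sections
  are disjoint and cover the preimage of U, so U is evenly covered. Finally f is onto since its range
  is open and closed in the connected space Y.\<close>

section \<open>Real induction and limits\<close>

lemma real_induction [consumes 2, case_names base limit step]:
  fixes a b t :: real
  assumes "a \<le> t" "t \<le> b"
    and base: "P a"
    and limit: "\<And>t. a < t \<Longrightarrow> t \<le> b \<Longrightarrow> (\<And>s. a \<le> s \<Longrightarrow> s < t \<Longrightarrow> P s) \<Longrightarrow> P t"
    and step: "\<And>t. a \<le> t \<Longrightarrow> t < b \<Longrightarrow> (\<And>s. a \<le> s \<Longrightarrow> s \<le> t \<Longrightarrow> P s) \<Longrightarrow>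
                 \<exists>u>t. \<forall>s. t < s \<longrightarrow> s < u \<longrightarrow> P s"
  shows "P t"
proof -
  define S where "S = {u. u \<le> b \<and> (\<forall>s. a \<le> s \<longrightarrow> s \<le> u \<longrightarrow> P s)}"
  define \<tau> where "\<tau> = Sup S"
  have aS: "a \<in> S" using assms(1,2) base by (auto simp: S_def)
  have bdd: "bdd_above S" by (auto simp: S_def intro: bdd_aboveI[of _ b])
  have a\<tau>: "a \<le> \<tau>" unfolding \<tau>_def using aS bdd by (rule cSup_upper)
  have \<tau>b: "\<tau> \<le> b" unfolding \<tau>_def using aS by (intro cSup_least) (auto simp: S_def)
  have below: "P s" if "a \<le> s" "s < \<tau>" for s
  proof -
    have "s < Sup S" using that by (simp add: \<tau>_def)
    then obtain u where "u \<in> S" "s < u" using less_cSupE aS by blast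
    then show ?thesis using that by (auto simp: S_def)
  qed
  have "P \<tau>"
    using base limit[OF _ \<tau>b below] a\<tau> by (cases "a = \<tau>") auto
  then have \<tau>S: "\<tau> \<in> S" using below \<tau>b by (auto simp: S_def order.order_iff_strict)
  have "\<tau> = b"
  proof (rule ccontr)
    assume "\<tau> \<noteq> b"
    then have "\<tau> < b" using \<tau>b by simp
    then obtain u where u: "\<tau> < u" "\<forall>s. \<tau> < s \<longrightarrow> s < u \<longrightarrow> P s"
      using step[OF a\<tau>] \<tau>S by (auto simp: S_def)
    define v where "v = min ((\<tau> + u) / 2) b"
    have "v \<in> S" using \<tau>S u \<open>\<tau> < b\<close> by (auto simp: S_def v_def not_le)
    then have "v \<le> \<tau>" unfolding \<tau>_def using bdd by (rule cSup_upper)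
    then show False using u \<open>\<tau> < b\<close> by (auto simp: v_def min_def split: if_splits)
  qed
  then show ?thesis using \<tau>S assms(1,2) by (auto simp: S_def)
qed

lemma complete_Cauchy_imp_tendsto:
  fixes c :: "'c \<Rightarrow> 'a::metric_space"
  assumes "complete (UNIV :: 'a set)" "F \<noteq> bot"
    and "\<And>e. e > 0 \<Longrightarrow> \<exists>P. eventually P F \<and> (\<forall>s t. P s \<and> P t \<longrightarrow> dist (c s) (c t) < e)"
  shows "\<exists>p. (c \<longlongrightarrow> p) F"
proof -
  have "cauchy_filter (filtermap c F)"
    using assms(3) by (auto simp: cauchy_filter_metric_filtermap)
  moreover have "filtermap c F \<noteq> bot" using assms(2) by (simp add: filtermap_bot_iff)
  ultimately show ?thesis
    using assms(1) unfolding complete_uniform filterlim_def by auto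
qed

lemma continuous_on_Icc_extend_at_left:
  fixes c :: "real \<Rightarrow> 'a::topological_space"
  assumes cont: "\<And>b. a \<le> b \<Longrightarrow> b < T \<Longrightarrow> continuous_on {a..b} c"
    and lim: "(c \<longlongrightarrow> c T) (at_left T)" and "a < T"
  shows "continuous_on {a..T} c"
proof (subst continuous_on_eq_continuous_within, intro ballI)
  fix t assume t: "t \<in> {a..T}"
  show "continuous (at t within {a..T}) c"
  proof (cases "t < T")
    case True
    define b where "b = (t + T) / 2"
    have b: "a \<le> b" "b < T" "t < b" using True t by (auto simp: b_def)
    have "at t within {a..T} = at t within {a..b}"
      by (rule at_within_nhd[where S = "{..<b}"]) (use b True in auto)
    then show ?thesis
      using cont[OF b(1,2)] t b by (simp add: continuous_on_eq_continuous_within)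
  next
    case False
    then have "t = T" using t by simp
    then show ?thesis
      using lim at_within_Icc_at_left[OF \<open>a < T\<close>] by (simp add: continuous_within)
  qed
qed

section \<open>Local homeomorphisms\<close>

lemma local_homeomorphism_imp_isCont:
  fixes f :: "'a::t2_space \<Rightarrow> 'b::topological_space"
  assumes "local_homeomorphism f" shows "isCont f x"
proof -
  obtain U V g where "x \<in> U" "open U" "homeomorphism U V f g"
    using assms unfolding local_homeomorphism_def by blast
  then show ?thesis using homeomorphism_cont1 continuous_on_eq_continuous_at by blast
qed

lemma local_homeomorphism_imp_continuous_on:
  fixes f :: "'a::t2_space \<Rightarrow> 'b::topological_space"
  assumes "local_homeomorphism f" shows "continuous_on S f"
  using local_homeomorphism_imp_isCont[OF assms] by (simp add: continuous_at_imp_continuous_on)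

lemma local_homeomorphism_lift_unique:
  fixes f :: "'a::metric_space \<Rightarrow> 'b::topological_space"
  assumes lh: "local_homeomorphism f" and S: "connected S"
    and p: "continuous_on S p" and q: "continuous_on S q"
    and eq: "\<And>t. t \<in> S \<Longrightarrow> f (p t) = f (q t)" and "a \<in> S" "p a = q a" and "t \<in> S"
  shows "p t = q t"
proof -
  let ?E = "{t \<in> S. p t = q t}"
  have clo: "closedin (top_of_set S) ?E"
    using closedin_continuous_maps_eq[of euclidean "top_of_set S" p q] p q
    by (simp add: continuous_map_iff_continuous)
  have ope: "openin (top_of_set S) ?E"
  proof (subst openin_subopen, intro ballI)
    fix u assume u: "u \<in> ?E"
    obtain A B g where A: "p u \<in> A" "open A" "homeomorphism A B f g"
      using lh unfolding local_homeomorphism_def by blast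
    let ?T = "S \<inter> p -` A \<inter> (S \<inter> q -` A)"
    have "openin (top_of_set S) ?T"
      by (intro openin_Int continuous_openin_preimage_gen p q A)
    moreover have "?T \<subseteq> ?E"
    proof
      fix v assume v: "v \<in> ?T"
      then have "g (f (p v)) = g (f (q v))" using eq by auto
      then show "v \<in> ?E" using v homeomorphism_apply1[OF A(3)] by auto
    qed
    moreover have "u \<in> ?T" using u A by auto
    ultimately show "\<exists>T. openin (top_of_set S) T \<and> u \<in> T \<and> T \<subseteq> ?E" by blast
  qed
  have "?E = {} \<or> ?E = S"
    using connected_clopen[THEN iffD1, OF S, rule_format, OF conjI[OF ope clo]] .
  then have "?E = S" using \<open>a \<in> S\<close> \<open>p a = q a\<close> by auto
  then show ?thesis using \<open>t \<in> S\<close> by blast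
qed

section \<open>Path variation and expanding maps\<close>

definition variation_sums :: "(real \<Rightarrow> 'a::metric_space) \<Rightarrow> real \<Rightarrow> real set" where
  "variation_sums p v = {(\<Sum>i<n. dist (p (t i)) (p (t (Suc i)))) | t n.
                          t 0 = 0 \<and> t n = v \<and> (\<forall>i<n. t i \<le> t (Suc i))}"

definition path_variation :: "(real \<Rightarrow> 'a::metric_space) \<Rightarrow> real \<Rightarrow> real" where
  "path_variation p v = Sup (variation_sums p v)"

lemma rectifiable_path_iff_bdd_above: "rectifiable_path p \<longleftrightarrow> bdd_above (variation_sums p 1)"
  unfolding rectifiable_path_def variation_sums_def by simp

lemma variation_sums_extend:
  assumes "e \<in> variation_sums p u" "u \<le> v"
  shows "e + dist (p u) (p v) \<in> variation_sums p v"
proof -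
  obtain t n where tn: "e = (\<Sum>i<n. dist (p (t i)) (p (t (Suc i))))" "t 0 = 0" "t n = u"
    "\<forall>i<n. t i \<le> t (Suc i)"
    using assms(1) unfolding variation_sums_def by blast
  define t' where "t' i = (if i \<le> n then t i else v)" for i
  have "(\<Sum>i<Suc n. dist (p (t' i)) (p (t' (Suc i)))) = e + dist (p u) (p v)"
    using tn by (simp add: t'_def)
  moreover have "t' 0 = 0" "t' (Suc n) = v" using tn by (auto simp: t'_def)
  moreover have "\<forall>i<Suc n. t' i \<le> t' (Suc i)"
    using tn assms(2) by (auto simp: t'_def less_Suc_eq)
  ultimately show ?thesis unfolding variation_sums_def mem_Collect_eq
    by (intro exI[of _ t'] exI[of _ "Suc n"]) auto
qed

lemma variation_sums_nonempty:
  assumes "0 \<le> v" shows "variation_sums p v \<noteq> {}"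
proof -
  have "0 + dist (p 0) (p v) \<in> variation_sums p v"
  proof (rule variation_sums_extend[OF _ assms])
    show "0 \<in> variation_sums p 0"
      unfolding variation_sums_def by (intro CollectI exI[of _ "\<lambda>_. 0"] exI[of _ 0]) simp
  qed
  then show ?thesis by blast
qed

lemma bdd_above_variation_sums:
  assumes "rectifiable_path p" "v \<le> 1" shows "bdd_above (variation_sums p v)"
proof -
  obtain M where M: "\<And>x. x \<in> variation_sums p 1 \<Longrightarrow> x \<le> M"
    using assms(1) unfolding rectifiable_path_iff_bdd_above bdd_above_def by blast
  show ?thesis
  proof (rule bdd_aboveI)
    fix e assume "e \<in> variation_sums p v"
    then have "e + dist (p v) (p 1) \<le> M" using M variation_sums_extend assms(2) by blast
    then show "e \<le> M" using zero_le_dist[of "p v" "p 1"] by linarith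
  qed
qed

lemma path_variation_add_dist_le:
  assumes "rectifiable_path p" "0 \<le> u" "u \<le> v" "v \<le> 1"
  shows "path_variation p u + dist (p u) (p v) \<le> path_variation p v"
proof -
  have "e + dist (p u) (p v) \<le> path_variation p v" if "e \<in> variation_sums p u" for e
    unfolding path_variation_def
    by (rule cSup_upper[OF variation_sums_extend[OF that assms(3)] bdd_above_variation_sums[OF assms(1,4)]])
  then have "path_variation p u \<le> path_variation p v - dist (p u) (p v)"
    unfolding path_variation_def[of p u]
    by (intro cSup_least variation_sums_nonempty assms(2)) (auto simp: algebra_simps)
  then show ?thesis by linarith
qed

lemma path_variation_mono:
  assumes "rectifiable_path p" "0 \<le> u" "u \<le> v" "v \<le> 1"
  shows "path_variation p u \<le> path_variation p v"
  using path_variation_add_dist_le[OF assms] zero_le_dist[of "p u" "p v"] by linarith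

lemma rectifiable_path_reversepath:
  assumes "rectifiable_path p" shows "rectifiable_path (reversepath p)"
proof -
  obtain M where M: "\<And>x. x \<in> variation_sums p 1 \<Longrightarrow> x \<le> M"
    using assms unfolding rectifiable_path_iff_bdd_above bdd_above_def by blast
  show ?thesis unfolding rectifiable_path_iff_bdd_above reversepath_def
  proof (rule bdd_aboveI)
    fix e assume "e \<in> variation_sums (\<lambda>t. p (1 - t)) 1"
    then obtain t n where tn: "e = (\<Sum>i<n. dist (p (1 - t i)) (p (1 - t (Suc i))))"
      "t 0 = 0" "t n = 1" "\<forall>i<n. t i \<le> t (Suc i)"
      unfolding variation_sums_def by blast
    define u where "u i = 1 - t (n - i)" for i
    have u_ends: "u 0 = 0" "u n = 1" using tn by (auto simp: u_def)
    have u_mono: "\<forall>i<n. u i \<le> u (Suc i)"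
    proof (intro allI impI)
      fix i assume i: "i < n"
      then have "Suc (n - Suc i) = n - i" by simp
      moreover have "t (n - Suc i) \<le> t (Suc (n - Suc i))" using tn(4) i by simp
      ultimately show "u i \<le> u (Suc i)" by (simp add: u_def)
    qed
    define g where "g j = dist (p (1 - t (Suc j))) (p (1 - t j))" for j
    have "(\<Sum>i<n. dist (p (u i)) (p (u (Suc i)))) = (\<Sum>i<n. g (n - Suc i))"
    proof (rule sum.cong[OF refl])
      fix i assume "i \<in> {..<n}"
      then have "Suc (n - Suc i) = n - i" by simp
      then show "dist (p (u i)) (p (u (Suc i))) = g (n - Suc i)"
        by (simp add: u_def g_def)
    qed
    also have "\<dots> = sum g {..<n}" by (rule sum.nat_diff_reindex)
    also have "\<dots> = e" unfolding tn(1) g_def by (simp add: dist_commute)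
    finally have "e \<in> variation_sums p 1"
      unfolding variation_sums_def mem_Collect_eq
      by (intro exI[of _ u] exI[of _ n]) (use u_ends u_mono in auto)
    then show "e \<le> M" using M by blast
  qed
qed

definition locally_expanding :: "real \<Rightarrow> ('a::metric_space \<Rightarrow> 'b::metric_space) \<Rightarrow> bool" where
  "locally_expanding \<beta> f \<longleftrightarrow> (\<forall>x. \<exists>r>0. \<forall>z. dist z x < r \<longrightarrow> \<beta> * dist z x \<le> dist (f z) (f x))"

lemma lower_scalar_deriv_imp_locally_expanding:
  fixes f :: "'a::metric_space \<Rightarrow> 'b::metric_space"
  assumes deriv: "\<And>x. ereal \<alpha> \<le> lower_scalar_deriv f x" and "\<beta> < \<alpha>"
  shows "locally_expanding \<beta> f"
  unfolding locally_expanding_def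
proof
  fix x
  have "ereal \<beta> < ereal \<alpha>" using \<open>\<beta> < \<alpha>\<close> by simp
  also note deriv[of x]
  finally have "\<forall>\<^sub>F z in at x. ereal \<beta> < ereal (dist (f z) (f x) / dist z x)"
    unfolding lower_scalar_deriv_def by (rule less_LiminfD)
  then obtain r where r: "r > 0"
    "\<And>z. z \<noteq> x \<Longrightarrow> dist z x < r \<Longrightarrow> \<beta> < dist (f z) (f x) / dist z x"
    unfolding eventually_at by auto
  have "\<beta> * dist z x \<le> dist (f z) (f x)" if "dist z x < r" for z
  proof (cases "z = x")
    case False
    then show ?thesis using r(2)[OF False that] by (simp add: less_divide_eq)
  qed simp
  then show "\<exists>r>0. \<forall>z. dist z x < r \<longrightarrow> \<beta> * dist z x \<le> dist (f z) (f x)"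
    using r(1) by blast
qed

lemma lift_dist_le_path_variation_right:
  fixes f :: "'a::metric_space \<Rightarrow> 'b::metric_space"
  assumes expand: "locally_expanding \<beta> f"
    and rect: "rectifiable_path \<gamma>" and c: "continuous_on {0..b} c" and "b \<le> 1"
    and lift: "\<And>t. t \<in> {0..b} \<Longrightarrow> f (c t) = \<gamma> t"
    and "0 \<le> t" "t < b"
  shows "\<exists>u>t. \<forall>v. t < v \<longrightarrow> v < u \<longrightarrow> \<beta> * dist (c t) (c v) \<le> path_variation \<gamma> v - path_variation \<gamma> t"
proof -
  obtain r where r: "r > 0" "\<And>z. dist z (c t) < r \<Longrightarrow> \<beta> * dist z (c t) \<le> dist (f z) (f (c t))"
    using expand unfolding locally_expanding_def by blast
  have "continuous (at t within {0..b}) c"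
    using c \<open>0 \<le> t\<close> \<open>t < b\<close> by (simp add: continuous_on_eq_continuous_within)
  then obtain d where d: "d > 0" "\<And>v. v \<in> {0..b} \<Longrightarrow> dist v t < d \<Longrightarrow> dist (c v) (c t) < r"
    using r(1) unfolding continuous_within_eps_delta by blast
  have "\<beta> * dist (c t) (c v) \<le> path_variation \<gamma> v - path_variation \<gamma> t"
    if v: "t < v" "v < min (t + d) b" for v
  proof -
    have "\<beta> * dist (c v) (c t) \<le> dist (f (c v)) (f (c t))"
      using v d \<open>0 \<le> t\<close> by (intro r(2) d(2)) (auto simp: dist_real_def)
    also have "\<dots> = dist (\<gamma> t) (\<gamma> v)"
      using lift v \<open>0 \<le> t\<close> by (simp add: dist_commute)
    also have "\<dots> \<le> path_variation \<gamma> v - path_variation \<gamma> t"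
      using path_variation_add_dist_le[OF rect, of t v] v \<open>0 \<le> t\<close> \<open>b \<le> 1\<close> by simp
    finally show ?thesis by (simp add: dist_commute)
  qed
  then show ?thesis using d(1) \<open>t < b\<close> by (intro exI[of _ "min (t + d) b"]) auto
qed

lemma lift_dist_le_path_variation:
  fixes f :: "'a::metric_space \<Rightarrow> 'b::metric_space"
  assumes expand: "locally_expanding \<beta> f" and "0 \<le> \<beta>"
    and rect: "rectifiable_path \<gamma>" and c: "continuous_on {0..b} c" and "b \<le> 1"
    and lift: "\<And>t. t \<in> {0..b} \<Longrightarrow> f (c t) = \<gamma> t"
    and "0 \<le> s" "s \<le> t" "t \<le> b"
  shows "\<beta> * dist (c s) (c t) \<le> path_variation \<gamma> t - path_variation \<gamma> s"
  using \<open>s \<le> t\<close> \<open>t \<le> b\<close>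
proof (induction t rule: real_induction)
  case base
  then show ?case by simp
next
  case (limit t)
  have "continuous_on {s..t} c"
    using continuous_on_subset[OF c] limit(2) \<open>0 \<le> s\<close> by simp
  then have "(c \<longlongrightarrow> c t) (at t within {s..t})"
    using limit(1) by (simp add: continuous_on_def)
  then have "(c \<longlongrightarrow> c t) (at_left t)" by (simp add: at_within_Icc_at_left[OF limit(1)])
  then have lim: "((\<lambda>v. \<beta> * dist (c s) (c v)) \<longlongrightarrow> \<beta> * dist (c s) (c t)) (at_left t)"
    by (intro tendsto_intros)
  have "\<forall>\<^sub>F v in at_left t. v \<in> {s<..<t}"
    using eventually_at_left_real[OF limit(1)] .
  then have "\<forall>\<^sub>F v in at_left t. \<beta> * dist (c s) (c v) \<le> path_variation \<gamma> t - path_variation \<gamma> s"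
  proof eventually_elim
    case (elim v)
    have "path_variation \<gamma> v \<le> path_variation \<gamma> t"
      using elim limit(2) \<open>0 \<le> s\<close> \<open>b \<le> 1\<close> by (intro path_variation_mono rect) auto
    then show ?case using limit(3)[of v] elim by auto
  qed
  then show ?case by (rule tendsto_upperbound[OF lim]) simp
next
  case (step t)
  obtain u where "u > t" and u: "\<And>v. t < v \<Longrightarrow> v < u \<Longrightarrow>
      \<beta> * dist (c t) (c v) \<le> path_variation \<gamma> v - path_variation \<gamma> t"
    using lift_dist_le_path_variation_right[OF expand rect c \<open>b \<le> 1\<close> lift _ step(2)] step(1) \<open>0 \<le> s\<close>
    by auto
  have "\<beta> * dist (c s) (c v) \<le> path_variation \<gamma> v - path_variation \<gamma> s" if "t < v" "v < u" for v
  proof -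
    have "\<beta> * dist (c s) (c v) \<le> \<beta> * dist (c s) (c t) + \<beta> * dist (c t) (c v)"
      using \<open>0 \<le> \<beta>\<close> dist_triangle[of "c s" "c v" "c t"] by (simp add: mult_left_mono flip: distrib_left)
    then show ?thesis using step(3)[of t] step(1) u[OF that] by simp
  qed
  then show ?case using \<open>u > t\<close> by blast
qed

section \<open>Lifting rectifiable paths\<close>

definition lift_on :: "('a::topological_space \<Rightarrow> 'b) \<Rightarrow> (real \<Rightarrow> 'b) \<Rightarrow> 'a \<Rightarrow> real \<Rightarrow> (real \<Rightarrow> 'a) \<Rightarrow> bool"
  where "lift_on f \<gamma> x0 b c \<longleftrightarrow> continuous_on {0..b} c \<and> c 0 = x0 \<and> (\<forall>t\<in>{0..b}. f (c t) = \<gamma> t)"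

lemma lift_on_restrict:
  assumes "lift_on f \<gamma> x0 b' c" "b \<le> b'" shows "lift_on f \<gamma> x0 b c"
  using assms continuous_on_subset[of "{0..b'}" c "{0..b}"] unfolding lift_on_def
  by (cases "0 \<le> b") auto

lemma lift_on_unique:
  fixes f :: "'a::metric_space \<Rightarrow> 'b::topological_space"
  assumes "local_homeomorphism f" "lift_on f \<gamma> x0 b c1" "lift_on f \<gamma> x0 b c2" "t \<in> {0..b}"
  shows "c1 t = c2 t"
  using assms local_homeomorphism_lift_unique[OF assms(1) connected_Icc, of 0 b c1 c2 0 t]
  unfolding lift_on_def by auto

lemma lift_on_glue:
  fixes f :: "'a::metric_space \<Rightarrow> 'b::topological_space"
  assumes lh: "local_homeomorphism f" and lifts: "\<And>b. 0 \<le> b \<Longrightarrow> b < T \<Longrightarrow> \<exists>c. lift_on f \<gamma> x0 b c"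
  obtains C where "\<And>b. 0 \<le> b \<Longrightarrow> b < T \<Longrightarrow> lift_on f \<gamma> x0 b C"
proof
  (* C t is the value at t of some lift on [0, t]; by uniqueness all these lifts agree. *)
  define C where "C t = (SOME c. lift_on f \<gamma> x0 t c) t" for t
  fix b assume b: "0 \<le> b" "b < T"
  obtain c where c: "lift_on f \<gamma> x0 b c" using lifts[OF b] by blast
  have "C t = c t" if t: "t \<in> {0..b}" for t
  proof -
    have "lift_on f \<gamma> x0 t c" using lift_on_restrict[OF c] t by simp
    then have "lift_on f \<gamma> x0 t (SOME c. lift_on f \<gamma> x0 t c)" by (rule someI[where P = "lift_on f \<gamma> x0 t"])
    then show ?thesis
      using lift_on_unique[OF lh _ \<open>lift_on f \<gamma> x0 t c\<close>] t by (simp add: C_def)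
  qed
  then show "lift_on f \<gamma> x0 b C"
    using c b continuous_on_eq[of "{0..b}" c C] unfolding lift_on_def by auto
qed

lemma lift_on_extend_right:
  fixes f :: "'a::metric_space \<Rightarrow> 'b::metric_space"
  assumes lh: "local_homeomorphism f" and "path \<gamma>"
    and c: "lift_on f \<gamma> x0 T c" and "0 \<le> T" "T < 1"
  shows "\<exists>u>T. u \<le> 1 \<and> (\<exists>c'. lift_on f \<gamma> x0 u c')"
proof -
  have \<gamma>: "continuous_on {0..1} \<gamma>" using \<open>path \<gamma>\<close> by (simp add: path_def)
  obtain A B g where AB: "c T \<in> A" "open B" "homeomorphism A B f g"
    using lh unfolding local_homeomorphism_def by blast
  have fcT: "f (c T) = \<gamma> T" using c \<open>0 \<le> T\<close> unfolding lift_on_def by auto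
  have "f (c T) \<in> B" using AB(1,3) unfolding homeomorphism_def by blast
  then obtain r where r: "r > 0" "ball (\<gamma> T) r \<subseteq> B" using AB(2) open_contains_ball fcT by metis
  have "continuous (at T within {0..1}) \<gamma>"
    using \<gamma> \<open>0 \<le> T\<close> \<open>T < 1\<close> by (simp add: continuous_on_eq_continuous_within)
  then obtain d where d: "d > 0" "\<And>t. t \<in> {0..1} \<Longrightarrow> dist t T < d \<Longrightarrow> dist (\<gamma> t) (\<gamma> T) < r"
    using r(1) unfolding continuous_within_eps_delta by blast
  define u where "u = min (T + d/2) 1"
  have u: "T < u" "u \<le> 1" using d \<open>T < 1\<close> by (auto simp: u_def)
  have in_B: "\<gamma> t \<in> B" if "t \<in> {T..u}" for t
    using d(2)[of t] that r(2) u \<open>0 \<le> T\<close> d(1)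
    by (auto simp: u_def dist_real_def dist_commute subset_iff)
  define c' where "c' t = (if t \<le> T then c t else g (\<gamma> t))" for t
  have "continuous_on ({0..T} \<union> {T..u}) c'"
    unfolding c'_def
  proof (rule continuous_on_cases)
    show "continuous_on {0..T} c" using c unfolding lift_on_def by simp
    show "continuous_on {T..u} (\<lambda>t. g (\<gamma> t))"
    proof (rule continuous_on_compose2[of B g])
      show "continuous_on B g" using AB(3) homeomorphism_cont2 by blast
      show "continuous_on {T..u} \<gamma>" by (rule continuous_on_subset[OF \<gamma>]) (use \<open>0 \<le> T\<close> u in auto)
    qed (use in_B in auto)
    show "\<forall>t. t \<in> {0..T} \<and> \<not> t \<le> T \<or> t \<in> {T..u} \<and> t \<le> T \<longrightarrow> c t = g (\<gamma> t)"
      using fcT homeomorphism_apply1[OF AB(3) AB(1)] by auto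
  qed auto
  moreover have "{0..T} \<union> {T..u} = {0..u}" using \<open>0 \<le> T\<close> u by auto
  moreover have "f (c' t) = \<gamma> t" if "t \<in> {0..u}" for t
    using c that in_B[of t] homeomorphism_apply2[OF AB(3)] unfolding lift_on_def c'_def by auto
  ultimately have "lift_on f \<gamma> x0 u c'"
    using c \<open>0 \<le> T\<close> unfolding lift_on_def c'_def by auto
  then show ?thesis using u by blast
qed

lemma lift_tendsto_at_left:
  fixes f :: "'a::metric_space \<Rightarrow> 'b::metric_space"
  assumes "complete (UNIV :: 'a set)" and expand: "locally_expanding \<beta> f" and "0 < \<beta>"
    and rect: "rectifiable_path \<gamma>" and "0 < T" "T \<le> 1"
    and C: "\<And>b. 0 \<le> b \<Longrightarrow> b < T \<Longrightarrow> lift_on f \<gamma> x0 b C"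
  shows "\<exists>p. (C \<longlongrightarrow> p) (at_left T)"
proof (rule complete_Cauchy_imp_tendsto[OF assms(1)])
  show "at_left T \<noteq> bot" by simp
  fix e :: real assume "e > 0"
  let ?V = "path_variation \<gamma>"
  have bdd: "bdd_above (?V ` {0..<T})"
    using \<open>T \<le> 1\<close> by (intro bdd_aboveI[of _ "?V 1"]) (auto intro: path_variation_mono[OF rect])
  (* choose t0 such that the variation of \<gamma> grows by less than \<beta> e on [t0, T) *)
  have "Sup (?V ` {0..<T}) - \<beta> * e < Sup (?V ` {0..<T})" using \<open>0 < \<beta>\<close> \<open>e > 0\<close> by simp
  moreover have "?V ` {0..<T} \<noteq> {}" using \<open>0 < T\<close> by simp
  ultimately obtain v where "v \<in> ?V ` {0..<T}" "Sup (?V ` {0..<T}) - \<beta> * e < v"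
    by (rule less_cSupE)
  then obtain t0 where t0: "0 \<le> t0" "t0 < T" "Sup (?V ` {0..<T}) - \<beta> * e < ?V t0"
    by auto
  have close: "dist (C s) (C t) < e" if "t0 < s" "s \<le> t" "t < T" for s t
  proof -
    have "\<beta> * dist (C s) (C t) \<le> ?V t - ?V s"
      using C[of t] that t0 \<open>T \<le> 1\<close> \<open>0 < \<beta>\<close> unfolding lift_on_def
      by (intro lift_dist_le_path_variation[OF expand _ rect, of t]) auto
    also have "\<dots> \<le> Sup (?V ` {0..<T}) - ?V t0"
      using cSup_upper[OF _ bdd, of "?V t"] path_variation_mono[OF rect, of t0 s] that t0 \<open>T \<le> 1\<close>
      by auto
    also have "\<dots> < \<beta> * e" using t0 by simp
    finally show ?thesis using \<open>0 < \<beta>\<close> by simp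
  qed
  show "\<exists>P. eventually P (at_left T) \<and> (\<forall>s t. P s \<and> P t \<longrightarrow> dist (C s) (C t) < e)"
  proof (intro exI conjI)
    show "eventually (\<lambda>s. s \<in> {t0<..<T}) (at_left T)" by (rule eventually_at_left_real[OF t0(2)])
    show "\<forall>s t. s \<in> {t0<..<T} \<and> t \<in> {t0<..<T} \<longrightarrow> dist (C s) (C t) < e"
      using close by (metis dist_commute greaterThanLessThan_iff linorder_le_cases)
  qed
qed

lemma lift_in_chart:
  fixes f :: "'a::metric_space \<Rightarrow> 'b::topological_space" and c :: "real \<Rightarrow> 'a"
  assumes lh: "local_homeomorphism f" and chart: "homeomorphism A B f g"
    and c: "continuous_on {a..b} c" and \<gamma>: "continuous_on {a..b} \<gamma>" and "\<gamma> ` {a..b} \<subseteq> B"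
    and lift: "\<And>t. t \<in> {a..b} \<Longrightarrow> f (c t) = \<gamma> t" and "c a \<in> A" and t: "t \<in> {a..b}"
  shows "c t = g (\<gamma> t)"
proof (rule local_homeomorphism_lift_unique[OF lh connected_Icc c, where q = "\<lambda>t. g (\<gamma> t)" and a = a])
  have "continuous_on B g" using chart homeomorphism_cont2 by blast
  then show "continuous_on {a..b} (\<lambda>t. g (\<gamma> t))"
    using \<gamma> \<open>\<gamma> ` {a..b} \<subseteq> B\<close> by (rule continuous_on_compose2)
  show "f (c s) = f (g (\<gamma> s))" if "s \<in> {a..b}" for s
    using lift[OF that] homeomorphism_apply2[OF chart] \<open>\<gamma> ` {a..b} \<subseteq> B\<close> that by (simp add: image_subset_iff)
  show "a \<in> {a..b}" using t by simp
  then show "c a = g (\<gamma> a)"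
    using lift homeomorphism_apply1[OF chart \<open>c a \<in> A\<close>] by metis
qed (rule t)

lemma lift_family_continuous_extend_in_chart:
  fixes f :: "'a::metric_space \<Rightarrow> 'b::metric_space" and H :: "'c::metric_space \<times> real \<Rightarrow> 'b"
    and K :: "'c \<Rightarrow> real \<Rightarrow> 'a"
  assumes lh: "local_homeomorphism f" and H: "continuous_on (U \<times> {0..1}) H"
    and K: "\<And>y. y \<in> U \<Longrightarrow> lift_on f (\<lambda>t. H (y, t)) x0 1 (K y)"
    and chart: "homeomorphism A B f g" "open A" and "K y1 \<tau>0 \<in> A" and "y1 \<in> U" and "\<delta> > 0"
    and in_B: "\<And>y t. y \<in> U \<Longrightarrow> dist y y1 < \<delta> \<Longrightarrow> t \<in> {\<tau>0..\<tau>'} \<Longrightarrow> H (y, t) \<in> B"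
    and "0 \<le> \<tau>0" "\<tau>0 \<le> \<tau>'" "\<tau>' \<le> 1"
    and N0: "open N0" "y1 \<in> N0" "continuous_on ((N0 \<inter> U) \<times> {0..\<tau>0}) (\<lambda>z. K (fst z) (snd z))"
  shows "\<exists>N. open N \<and> y1 \<in> N \<and> continuous_on ((N \<inter> U) \<times> {0..\<tau>'}) (\<lambda>z. K (fst z) (snd z))"
proof -
  define G where "G = (\<lambda>z. K (fst z) (snd z))"
  have "continuous_on (N0 \<inter> U) (\<lambda>y. G (y, \<tau>0))"
    by (rule continuous_on_compose2[OF N0(3)[folded G_def]])
       (auto intro!: continuous_intros simp: \<open>0 \<le> \<tau>0\<close>)
  then have "openin (top_of_set (N0 \<inter> U)) (N0 \<inter> U \<inter> (\<lambda>y. K y \<tau>0) -` A)"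
    using chart(2) unfolding G_def by (auto intro: continuous_openin_preimage_gen)
  then obtain W where W: "open W" "N0 \<inter> U \<inter> (\<lambda>y. K y \<tau>0) -` A = N0 \<inter> U \<inter> W"
    unfolding openin_open by auto
  define N where "N = N0 \<inter> W \<inter> ball y1 \<delta>"
  have N: "open N" "y1 \<in> N" using N0 W \<open>y1 \<in> U\<close> \<open>K y1 \<tau>0 \<in> A\<close> \<open>\<delta> > 0\<close> by (auto simp: N_def)
  have H_sub: "continuous_on ((N \<inter> U) \<times> {\<tau>0..\<tau>'}) H"
    by (rule continuous_on_subset[OF H]) (use \<open>0 \<le> \<tau>0\<close> \<open>\<tau>' \<le> 1\<close> in auto)
  have B: "H ` ((N \<inter> U) \<times> {\<tau>0..\<tau>'}) \<subseteq> B"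
    using in_B by (auto simp: N_def dist_commute)
  have "G (y, t) = g (H (y, t))" if y: "y \<in> N \<inter> U" and t: "t \<in> {\<tau>0..\<tau>'}" for y t
    unfolding G_def fst_conv snd_conv
  proof (rule lift_in_chart[OF lh chart(1) _ _ _ _ _ t])
    have lift_y: "lift_on f (\<lambda>t. H (y, t)) x0 1 (K y)" using K y by simp
    then show "continuous_on {\<tau>0..\<tau>'} (K y)"
      using \<open>0 \<le> \<tau>0\<close> \<open>\<tau>' \<le> 1\<close> by (auto simp: lift_on_def intro: continuous_on_subset)
    show "continuous_on {\<tau>0..\<tau>'} (\<lambda>t. H (y, t))"
      by (rule continuous_on_compose2[OF H_sub]) (use y in \<open>auto intro!: continuous_intros\<close>)
    show "(\<lambda>t. H (y, t)) ` {\<tau>0..\<tau>'} \<subseteq> B" using B y by auto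
    show "f (K y s) = H (y, s)" if "s \<in> {\<tau>0..\<tau>'}" for s
      using lift_y that \<open>0 \<le> \<tau>0\<close> \<open>\<tau>' \<le> 1\<close> by (simp add: lift_on_def)
    show "K y \<tau>0 \<in> A" using y W(2) by (auto simp: N_def)
  qed
  then have "continuous_on ((N \<inter> U) \<times> {\<tau>0..\<tau>'}) G"
    using continuous_on_compose2[OF homeomorphism_cont2[OF chart(1)] H_sub B]
    by (auto intro: continuous_on_eq)
  moreover have "continuous_on ((N \<inter> U) \<times> {0..\<tau>0}) G"
    by (rule continuous_on_subset[OF N0(3)[folded G_def]]) (auto simp: N_def)
  moreover have "{z \<in> (N \<inter> U) \<times> {0..\<tau>'}. snd z \<le> \<tau>0} = (N \<inter> U) \<times> {0..\<tau>0}"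
    and "{z \<in> (N \<inter> U) \<times> {0..\<tau>'}. \<tau>0 \<le> snd z} = (N \<inter> U) \<times> {\<tau>0..\<tau>'}"
    using \<open>0 \<le> \<tau>0\<close> \<open>\<tau>0 \<le> \<tau>'\<close> by auto
  (* paste the two pieces along snd z = \<tau>0 *)
  ultimately have "continuous_on ((N \<inter> U) \<times> {0..\<tau>'}) (\<lambda>z. if snd z \<le> \<tau>0 then G z else G z)"
    by (intro continuous_on_cases_le continuous_on_snd continuous_on_id) auto
  then show ?thesis using N unfolding G_def by auto
qed

lemma lift_family_chart_near:
  fixes f :: "'a::metric_space \<Rightarrow> 'b::metric_space" and H :: "'c::metric_space \<times> real \<Rightarrow> 'b"
    and K :: "'c \<Rightarrow> real \<Rightarrow> 'a"
  assumes lh: "local_homeomorphism f" and H: "continuous_on (U \<times> {0..1}) H"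
    and K: "\<And>y. y \<in> U \<Longrightarrow> lift_on f (\<lambda>t. H (y, t)) x0 1 (K y)" and y1: "y1 \<in> U"
    and \<tau>: "\<tau> \<in> {0..1}"
  obtains A B g \<delta> where "homeomorphism A B f g" "open A" "\<delta> > 0"
    "\<And>t. t \<in> {0..1} \<Longrightarrow> dist t \<tau> < \<delta> \<Longrightarrow> K y1 t \<in> A"
    "\<And>y t. y \<in> U \<Longrightarrow> t \<in> {0..1} \<Longrightarrow> dist y y1 < \<delta> \<Longrightarrow> dist t \<tau> < \<delta> \<Longrightarrow> H (y, t) \<in> B"
proof -
  have K1: "continuous_on {0..1} (K y1)" "f (K y1 \<tau>) = H (y1, \<tau>)"
    using K[OF y1] \<tau> by (auto simp: lift_on_def)
  obtain A B g where AB: "K y1 \<tau> \<in> A" "open A" "open B" "homeomorphism A B f g"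
    using lh unfolding local_homeomorphism_def by blast
  have "f (K y1 \<tau>) \<in> B" using AB(1,4) unfolding homeomorphism_def by blast
  then obtain r2 where r2: "r2 > 0" "ball (H (y1, \<tau>)) r2 \<subseteq> B"
    using AB(3) K1(2) open_contains_ball by metis
  obtain r1 where r1: "r1 > 0" "ball (K y1 \<tau>) r1 \<subseteq> A" using AB(1,2) open_contains_ball by blast
  have "continuous (at \<tau> within {0..1}) (K y1)"
    using K1(1) \<tau> continuous_on_eq_continuous_within by blast
  then obtain d1 where d1: "d1 > 0" "\<And>t. t \<in> {0..1} \<Longrightarrow> dist t \<tau> < d1 \<Longrightarrow> dist (K y1 t) (K y1 \<tau>) < r1"
    using r1(1) unfolding continuous_within_eps_delta by blast
  have "continuous (at (y1, \<tau>) within (U \<times> {0..1})) H"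
    using H y1 \<tau> continuous_on_eq_continuous_within by blast
  then obtain d2 where d2: "d2 > 0"
    "\<And>z. z \<in> U \<times> {0..1} \<Longrightarrow> dist z (y1, \<tau>) < d2 \<Longrightarrow> dist (H z) (H (y1, \<tau>)) < r2"
    using r2(1) unfolding continuous_within_eps_delta by blast
  define \<delta> where "\<delta> = min d1 (d2 / 2)"
  show thesis
  proof (rule that[OF AB(4,2), of \<delta>])
    show "\<delta> > 0" using d1 d2 by (simp add: \<delta>_def)
    show "K y1 t \<in> A" if "t \<in> {0..1}" "dist t \<tau> < \<delta>" for t
      using d1(2)[OF that(1)] that(2) r1(2) by (auto simp: \<delta>_def dist_commute)
    show "H (y, t) \<in> B" if "y \<in> U" "t \<in> {0..1}" "dist y y1 < \<delta>" "dist t \<tau> < \<delta>" for y t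
    proof -
      have "dist (y, t) (y1, \<tau>) \<le> dist y y1 + dist t \<tau>"
        unfolding dist_Pair_Pair by (rule sqrt_sum_squares_le_sum) auto
      also have "\<dots> < d2" using that by (simp add: \<delta>_def)
      finally have "dist (H (y, t)) (H (y1, \<tau>)) < r2" using d2(2) that by auto
      then show ?thesis using r2(2) by (auto simp: dist_commute)
    qed
  qed
qed

lemma lift_on_continuous_in_parameter:
  fixes f :: "'a::metric_space \<Rightarrow> 'b::metric_space" and H :: "'c::metric_space \<times> real \<Rightarrow> 'b"
    and K :: "'c \<Rightarrow> real \<Rightarrow> 'a"
  assumes lh: "local_homeomorphism f" and H: "continuous_on (U \<times> {0..1}) H"
    and K: "\<And>y. y \<in> U \<Longrightarrow> lift_on f (\<lambda>t. H (y, t)) x0 1 (K y)" and y1: "y1 \<in> U"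
  shows "\<exists>N. open N \<and> y1 \<in> N \<and> continuous_on ((N \<inter> U) \<times> {0..1}) (\<lambda>z. K (fst z) (snd z))"
proof -
  define P where "P \<tau> \<longleftrightarrow> (\<exists>N. open N \<and> y1 \<in> N \<and> continuous_on ((N \<inter> U) \<times> {0..\<tau>}) (\<lambda>z. K (fst z) (snd z)))"
    for \<tau>
  have extend: "\<exists>\<delta>>0. \<forall>\<tau>0 \<tau>'. 0 \<le> \<tau>0 \<longrightarrow> \<tau>0 \<le> \<tau>' \<longrightarrow> \<tau>' \<le> 1 \<longrightarrow> \<tau> - \<delta> < \<tau>0 \<longrightarrow> \<tau>' < \<tau> + \<delta> \<longrightarrow>
      P \<tau>0 \<longrightarrow> P \<tau>'" if \<tau>: "\<tau> \<in> {0..1}" for \<tau>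
  proof -
    obtain A B g \<delta> where chart: "homeomorphism A B f g" "open A" and "\<delta> > 0"
      and in_A: "\<And>t. t \<in> {0..1} \<Longrightarrow> dist t \<tau> < \<delta> \<Longrightarrow> K y1 t \<in> A"
      and in_B: "\<And>y t. y \<in> U \<Longrightarrow> t \<in> {0..1} \<Longrightarrow> dist y y1 < \<delta> \<Longrightarrow> dist t \<tau> < \<delta> \<Longrightarrow> H (y, t) \<in> B"
      using lift_family_chart_near[OF lh H K y1 \<tau>] by blast
    have "P \<tau>'" if "0 \<le> \<tau>0" "\<tau>0 \<le> \<tau>'" "\<tau>' \<le> 1" "\<tau> - \<delta> < \<tau>0" "\<tau>' < \<tau> + \<delta>" "P \<tau>0" for \<tau>0 \<tau>'
    proof -
      have near: "dist t \<tau> < \<delta>" if "t \<in> {\<tau>0..\<tau>'}" for t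
        using that \<open>\<tau> - \<delta> < \<tau>0\<close> \<open>\<tau>' < \<tau> + \<delta>\<close> by (auto simp: dist_real_def)
      obtain N0 where "open N0" "y1 \<in> N0"
        "continuous_on ((N0 \<inter> U) \<times> {0..\<tau>0}) (\<lambda>z. K (fst z) (snd z))"
        using \<open>P \<tau>0\<close> unfolding P_def by blast
      moreover have "K y1 \<tau>0 \<in> A" using in_A near[of \<tau>0] that by auto
      moreover have "H (y, t) \<in> B" if "y \<in> U" "dist y y1 < \<delta>" "t \<in> {\<tau>0..\<tau>'}" for y t
        using in_B near that \<open>0 \<le> \<tau>0\<close> \<open>\<tau>' \<le> 1\<close> by auto
      ultimately show ?thesis
        unfolding P_def using that(1-3) \<open>\<delta> > 0\<close>
        by (intro lift_family_continuous_extend_in_chart[OF lh H K chart _ y1]) auto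
    qed
    then show ?thesis using \<open>\<delta> > 0\<close> by blast
  qed
  have "P \<tau>" if "0 \<le> \<tau>" "\<tau> \<le> 1" for \<tau>
    using that
  proof (induction \<tau> rule: real_induction)
    case base
    have "continuous_on ((UNIV \<inter> U) \<times> {0..0}) (\<lambda>z. K (fst z) (snd z))"
      using K by (intro continuous_on_eq[OF continuous_on_const[of _ x0]]) (auto simp: lift_on_def)
    then show ?case unfolding P_def by blast
  next
    case (limit t)
    then obtain \<delta> where "\<delta> > 0" and \<delta>: "\<And>\<tau>0 \<tau>'. 0 \<le> \<tau>0 \<Longrightarrow> \<tau>0 \<le> \<tau>' \<Longrightarrow> \<tau>' \<le> 1 \<Longrightarrow>
        t - \<delta> < \<tau>0 \<Longrightarrow> \<tau>' < t + \<delta> \<Longrightarrow> P \<tau>0 \<Longrightarrow> P \<tau>'"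
      using extend[of t] by auto
    show ?case using \<delta>[of "max 0 (t - \<delta>/2)" t] limit \<open>\<delta> > 0\<close> by auto
  next
    case (step t)
    then obtain \<delta> where "\<delta> > 0" and \<delta>: "\<And>\<tau>0 \<tau>'. 0 \<le> \<tau>0 \<Longrightarrow> \<tau>0 \<le> \<tau>' \<Longrightarrow> \<tau>' \<le> 1 \<Longrightarrow>
        t - \<delta> < \<tau>0 \<Longrightarrow> \<tau>' < t + \<delta> \<Longrightarrow> P \<tau>0 \<Longrightarrow> P \<tau>'"
      using extend[of t] by auto
    show ?case using \<delta>[of t] step \<open>\<delta> > 0\<close> by (intro exI[of _ "min (t + \<delta>) 1"]) auto
  qed
  then show ?thesis unfolding P_def by simp
qed

locale expanding_local_homeomorphism =
  fixes f :: "'a::metric_space \<Rightarrow> 'b::metric_space" and \<beta> :: real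
  assumes local_homeo: "local_homeomorphism f" and complete: "complete (UNIV :: 'a set)"
    and expanding: "locally_expanding \<beta> f" and pos: "0 < \<beta>"
begin

lemma lift_on_left_limit:
  assumes "path \<gamma>" and rect: "rectifiable_path \<gamma>" and "0 < T" "T \<le> 1"
    and lifts: "\<And>b. 0 \<le> b \<Longrightarrow> b < T \<Longrightarrow> \<exists>c. lift_on f \<gamma> x0 b c"
  shows "\<exists>c. lift_on f \<gamma> x0 T c"
proof -
  obtain C where C: "\<And>b. 0 \<le> b \<Longrightarrow> b < T \<Longrightarrow> lift_on f \<gamma> x0 b C"
    using lift_on_glue[OF local_homeo lifts] by blast
  obtain p where p: "(C \<longlongrightarrow> p) (at_left T)"
    using lift_tendsto_at_left[OF complete expanding pos rect \<open>0 < T\<close> \<open>T \<le> 1\<close> C] by blast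
  define c where "c s = (if s = T then p else C s)" for s
  have "\<forall>\<^sub>F s in at_left T. s \<in> {0<..<T}" by (rule eventually_at_left_real[OF \<open>0 < T\<close>])
  then have ev_C: "\<forall>\<^sub>F s in at_left T. c s = C s \<and> f (C s) = \<gamma> s"
  proof eventually_elim
    case (elim s)
    then show ?case using C[of s] by (auto simp: c_def lift_on_def)
  qed
  have "\<forall>\<^sub>F s in at_left T. C s = c s" using ev_C by (rule eventually_mono) simp
  from Lim_transform_eventually[OF p this] have c_lim: "(c \<longlongrightarrow> c T) (at_left T)"
    by (simp add: c_def[of T])
  have "continuous_on {0..T} \<gamma>"
    by (rule continuous_on_subset[of "{0..1}"]) (use \<open>path \<gamma>\<close> \<open>T \<le> 1\<close> in \<open>auto simp: path_def\<close>)
  then have "(\<gamma> \<longlongrightarrow> \<gamma> T) (at T within {0..T})"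
    using \<open>0 < T\<close> by (simp add: continuous_on_def)
  then have "(\<gamma> \<longlongrightarrow> \<gamma> T) (at_left T)" by (simp add: at_within_Icc_at_left[OF \<open>0 < T\<close>])
  moreover have "\<forall>\<^sub>F s in at_left T. \<gamma> s = f (C s)" using ev_C by (rule eventually_mono) simp
  ultimately have "((\<lambda>s. f (C s)) \<longlongrightarrow> \<gamma> T) (at_left T)" by (rule Lim_transform_eventually)
  moreover have "((\<lambda>s. f (C s)) \<longlongrightarrow> f p) (at_left T)"
    using local_homeomorphism_imp_isCont[OF local_homeo] p by (rule isCont_tendsto_compose)
  ultimately have "f p = \<gamma> T" by (intro tendsto_unique[OF trivial_limit_at_left_real])
  moreover have "continuous_on {0..T} c"
  proof (rule continuous_on_Icc_extend_at_left[OF _ c_lim \<open>0 < T\<close>])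
    fix b assume "0 \<le> b" "b < T"
    then show "continuous_on {0..b} c"
      using C[of b] continuous_on_eq[of "{0..b}" C c] by (auto simp: c_def lift_on_def)
  qed
  moreover have "f (C t) = \<gamma> t" if "0 \<le> t" "t < T" for t
    using C[of t] that by (simp add: lift_on_def)
  ultimately have "lift_on f \<gamma> x0 T c"
    using C[of 0] \<open>0 < T\<close> unfolding lift_on_def c_def by auto
  then show ?thesis by blast
qed

lemma lift_on_exists:
  assumes "path \<gamma>" and "rectifiable_path \<gamma>" and "f x0 = \<gamma> 0"
  shows "\<exists>c. lift_on f \<gamma> x0 1 c"
proof -
  have "\<exists>c. lift_on f \<gamma> x0 b c" if "0 \<le> b" "b \<le> 1" for b
    using that
  proof (induction b rule: real_induction)
    case base
    have "lift_on f \<gamma> x0 0 (\<lambda>_. x0)" using \<open>f x0 = \<gamma> 0\<close> by (simp add: lift_on_def)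
    then show ?case by blast
  next
    case (limit T)
    then show ?case using lift_on_left_limit[OF assms(1,2)] by blast
  next
    case (step t)
    then obtain c where "lift_on f \<gamma> x0 t c" by blast
    then obtain u c' where "t < u" "u \<le> 1" "lift_on f \<gamma> x0 u c'"
      using lift_on_extend_right[OF local_homeo \<open>path \<gamma>\<close> _ step(1,2)] by blast
    then show ?case using lift_on_restrict[of f \<gamma> x0 u c'] by (intro exI[of _ u]) (auto intro: less_imp_le)
  qed
  then show ?thesis by simp
qed

definition lift :: "(real \<Rightarrow> 'b) \<Rightarrow> 'a \<Rightarrow> real \<Rightarrow> 'a" where
  "lift \<gamma> x0 = (SOME c. lift_on f \<gamma> x0 1 c)"

lemma lift_on_lift:
  assumes "path \<gamma>" "rectifiable_path \<gamma>" "f x0 = \<gamma> 0"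
  shows "lift_on f \<gamma> x0 1 (lift \<gamma> x0)"
  unfolding lift_def using someI_ex[OF lift_on_exists[OF assms]] .

end

section \<open>Evenly covered neighbourhoods\<close>

definition evenly_covered :: "('a::topological_space \<Rightarrow> 'b::topological_space) \<Rightarrow> 'b set \<Rightarrow> bool" where
  "evenly_covered f U \<longleftrightarrow> (\<exists>\<V>. \<Union>\<V> = f -` U \<and> (\<forall>V\<in>\<V>. open V) \<and> pairwise disjnt \<V> \<and>
                              (\<forall>V\<in>\<V>. \<exists>q. homeomorphism V U f q))"

lemma range_eq_UNIV_if_connected:
  fixes f :: "'a \<Rightarrow> 'b::topological_space"
  assumes "connected (UNIV :: 'b set)"
    and local: "\<And>y. \<exists>U. open U \<and> y \<in> U \<and> (U \<inter> range f \<noteq> {} \<longrightarrow> y \<in> range f) \<and>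
                       (y \<in> range f \<longrightarrow> U \<subseteq> range f)"
  shows "range f = UNIV"
proof -
  have "open (range f)"
  proof (subst open_subopen, intro ballI)
    fix y assume "y \<in> range f"
    moreover obtain U where "open U" "y \<in> U" "y \<in> range f \<longrightarrow> U \<subseteq> range f"
      using local[of y] by (elim exE conjE)
    ultimately show "\<exists>T. open T \<and> y \<in> T \<and> T \<subseteq> range f" by (intro exI[of _ U]) simp
  qed
  moreover have "open (- range f)"
  proof (subst open_subopen, intro ballI)
    fix y assume "y \<in> - range f"
    moreover obtain U where "open U" "y \<in> U" "U \<inter> range f \<noteq> {} \<longrightarrow> y \<in> range f"
      using local[of y] by (elim exE conjE)
    ultimately show "\<exists>T. open T \<and> y \<in> T \<and> T \<subseteq> - range f" by (intro exI[of _ U]) auto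
  qed
  ultimately have "range f \<inter> UNIV = {} \<or> - range f \<inter> UNIV = {}"
    by (rule connectedD[OF assms(1)]) auto
  moreover have "range f \<inter> UNIV \<noteq> {}" by simp
  ultimately show ?thesis by blast
qed

lemma covering_space_if_evenly_covered:
  assumes "continuous_on UNIV f" "range f = UNIV" "\<And>y. \<exists>U. open U \<and> y \<in> U \<and> evenly_covered f U"
  shows "covering_space UNIV f UNIV"
  unfolding covering_space_def
proof (intro conjI assms(1,2) ballI)
  fix y
  obtain U \<V> where "open U" "y \<in> U" "\<Union>\<V> = f -` U" "\<forall>V\<in>\<V>. open V" "pairwise disjnt \<V>"
    "\<forall>V\<in>\<V>. \<exists>q. homeomorphism V U f q"
    using assms(3)[of y] unfolding evenly_covered_def by (elim exE conjE)
  moreover have "openin (top_of_set UNIV) U" "\<Union>\<V> = UNIV \<inter> f -` U" "\<forall>V\<in>\<V>. openin (top_of_set UNIV) V"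
    using calculation by auto
  ultimately show "\<exists>U. y \<in> U \<and> openin (top_of_set UNIV) U \<and>
    (\<exists>\<V>. \<Union>\<V> = UNIV \<inter> f -` U \<and> (\<forall>V\<in>\<V>. openin (top_of_set UNIV) V) \<and> pairwise disjnt \<V> \<and>
         (\<forall>V\<in>\<V>. \<exists>q. homeomorphism V U f q))"
    by blast
qed

locale rectifiable_contraction = expanding_local_homeomorphism f \<beta>
  for f :: "'a::metric_space \<Rightarrow> 'b::metric_space" and \<beta> +
  fixes U :: "'b set" and H :: "'b \<times> real \<Rightarrow> 'b" and y0 :: 'b
  assumes open_U: "open U" and H_cont: "continuous_on (U \<times> {0..1}) H"
    and H_0: "\<And>y. y \<in> U \<Longrightarrow> H (y, 0) = y0" and H_1: "\<And>y. y \<in> U \<Longrightarrow> H (y, 1) = y"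
    and H_rect: "\<And>y. y \<in> U \<Longrightarrow> rectifiable_path (\<lambda>t. H (y, t))"
begin

lemma path_contraction_path: "y \<in> U \<Longrightarrow> path (\<lambda>t. H (y, t))"
  unfolding path_def
  by (rule continuous_on_compose2[OF H_cont]) (auto intro!: continuous_intros)

lemma lift_on_contraction_path:
  assumes "y \<in> U" "f x0 = y0"
  shows "lift_on f (\<lambda>t. H (y, t)) x0 1 (lift (\<lambda>t. H (y, t)) x0)"
  using assms path_contraction_path H_rect H_0 by (intro lift_on_lift) auto

definition sheet_map :: "'a \<Rightarrow> 'b \<Rightarrow> 'a" where
  "sheet_map x0 y = lift (\<lambda>t. H (y, t)) x0 1"

lemma f_sheet_map: "f x0 = y0 \<Longrightarrow> y \<in> U \<Longrightarrow> f (sheet_map x0 y) = y"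
  using lift_on_contraction_path[of y x0] H_1[of y] by (simp add: lift_on_def sheet_map_def)

lemma continuous_on_sheet_map:
  assumes "f x0 = y0" shows "continuous_on U (sheet_map x0)"
proof -
  have "isCont (sheet_map x0) y" if y: "y \<in> U" for y
  proof -
    obtain N where N: "open N" "y \<in> N"
      "continuous_on ((N \<inter> U) \<times> {0..1}) (\<lambda>z. lift (\<lambda>t. H (fst z, t)) x0 (snd z))"
      using lift_on_continuous_in_parameter[OF local_homeo H_cont lift_on_contraction_path y] assms
      by blast
    have "continuous_on (N \<inter> U) (\<lambda>y. lift (\<lambda>t. H (fst (y, 1::real), t)) x0 (snd (y, 1::real)))"
      by (rule continuous_on_compose2[OF N(3)]) (auto intro!: continuous_intros)
    then have "continuous_on (N \<inter> U) (sheet_map x0)" by (simp add: sheet_map_def)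
    then show ?thesis using N y open_U continuous_on_eq_continuous_at[of "N \<inter> U"] by blast
  qed
  then show ?thesis by (simp add: continuous_at_imp_continuous_on)
qed

lemma sheet_map_onto:
  assumes y: "y \<in> U" and "f x = y"
  obtains x0 where "f x0 = y0" "sheet_map x0 y = x"
proof -
  let ?\<rho> = "reversepath (\<lambda>t. H (y, t))"
  have "path ?\<rho>" using path_contraction_path[OF y] by simp
  moreover have "rectifiable_path ?\<rho>" using rectifiable_path_reversepath[OF H_rect[OF y]] .
  moreover have "f x = ?\<rho> 0" using H_1[OF y] \<open>f x = y\<close> by (simp add: reversepath_def)
  ultimately have c: "lift_on f ?\<rho> x 1 (lift ?\<rho> x)" by (rule lift_on_lift)
  define x0 where "x0 = lift ?\<rho> x 1"
  have x0: "f x0 = y0" using c H_0[OF y] by (simp add: lift_on_def x0_def reversepath_def)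
  have "lift (\<lambda>t. H (y, t)) x0 1 = reversepath (lift ?\<rho> x) 1"
  proof (rule local_homeomorphism_lift_unique[OF local_homeo connected_Icc[of 0 1], where a = 0])
    show "continuous_on {0..1} (lift (\<lambda>t. H (y, t)) x0)" "continuous_on {0..1} (reversepath (lift ?\<rho> x))"
      using lift_on_contraction_path[OF y x0] c by (auto simp: lift_on_def simp flip: path_def)
    show "f (lift (\<lambda>t. H (y, t)) x0 t) = f (reversepath (lift ?\<rho> x) t)" if "t \<in> {0..1}" for t
      using lift_on_contraction_path[OF y x0] c that by (auto simp: lift_on_def reversepath_def)
    show "lift (\<lambda>t. H (y, t)) x0 0 = reversepath (lift ?\<rho> x) 0"
      using lift_on_contraction_path[OF y x0] by (simp add: lift_on_def reversepath_def x0_def)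
  qed auto
  then have "sheet_map x0 y = x" using c by (simp add: sheet_map_def reversepath_def lift_on_def)
  then show ?thesis using x0 that by blast
qed

lemma sheet_map_inj:
  assumes x0: "f x0 = y0" and x1: "f x1 = y0" and "y \<in> U" "y' \<in> U"
    and eq: "sheet_map x0 y = sheet_map x1 y'"
  shows "x0 = x1"
proof -
  have "y' = y" using f_sheet_map[OF x0 \<open>y \<in> U\<close>] f_sheet_map[OF x1 \<open>y' \<in> U\<close>] eq by simp
  let ?c0 = "lift (\<lambda>t. H (y, t)) x0" and ?c1 = "lift (\<lambda>t. H (y, t)) x1"
  have c0: "lift_on f (\<lambda>t. H (y, t)) x0 1 ?c0" and c1: "lift_on f (\<lambda>t. H (y, t)) x1 1 ?c1"
    using lift_on_contraction_path \<open>y \<in> U\<close> x0 x1 by auto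
  have "reversepath ?c0 1 = reversepath ?c1 1"
  proof (rule local_homeomorphism_lift_unique[OF local_homeo connected_Icc[of 0 1], where a = 0])
    show "continuous_on {0..1} (reversepath ?c0)" "continuous_on {0..1} (reversepath ?c1)"
      using c0 c1 by (auto simp: lift_on_def simp flip: path_def)
    show "f (reversepath ?c0 t) = f (reversepath ?c1 t)" if "t \<in> {0..1}" for t
      using c0 c1 that by (auto simp: lift_on_def reversepath_def)
    show "reversepath ?c0 0 = reversepath ?c1 0"
      using eq \<open>y' = y\<close> by (simp add: sheet_map_def reversepath_def)
  qed auto
  then show ?thesis using c0 c1 by (simp add: lift_on_def reversepath_def)
qed

lemma open_sheet:
  assumes x0: "f x0 = y0" shows "open (sheet_map x0 ` U)"
proof (subst open_subopen, intro ballI)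
  fix w assume "w \<in> sheet_map x0 ` U"
  then obtain y where y: "y \<in> U" "w = sheet_map x0 y" by blast
  obtain A B g where A: "w \<in> A" "open A" "homeomorphism A B f g"
    using local_homeo unfolding local_homeomorphism_def by blast
  have "openin (top_of_set U) (U \<inter> sheet_map x0 -` A)"
    using continuous_on_sheet_map[OF x0] A(2) by (rule continuous_openin_preimage_gen)
  then have "open (U \<inter> sheet_map x0 -` A)" using open_U openin_open_trans by blast
  then have "open (A \<inter> f -` (U \<inter> sheet_map x0 -` A))"
    using open_Int[OF A(2) continuous_open_vimage] local_homeomorphism_imp_isCont[OF local_homeo]
    by blast
  moreover have "w \<in> A \<inter> f -` (U \<inter> sheet_map x0 -` A)"
    using y A f_sheet_map[OF x0 y(1)] by auto
  moreover have "A \<inter> f -` (U \<inter> sheet_map x0 -` A) \<subseteq> sheet_map x0 ` U"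
  proof
    fix w' assume w': "w' \<in> A \<inter> f -` (U \<inter> sheet_map x0 -` A)"
    then have "g (f (sheet_map x0 (f w'))) = g (f w')" using f_sheet_map[OF x0] by auto
    then have "sheet_map x0 (f w') = w'" using w' homeomorphism_apply1[OF A(3)] by auto
    then show "w' \<in> sheet_map x0 ` U" using w' by (metis IntE imageI vimageE)
  qed
  ultimately show "\<exists>T. open T \<and> w \<in> T \<and> T \<subseteq> sheet_map x0 ` U" by blast
qed

lemma homeomorphism_sheet:
  assumes x0: "f x0 = y0" shows "homeomorphism (sheet_map x0 ` U) U f (sheet_map x0)"
  unfolding homeomorphism_def
  using f_sheet_map[OF x0] continuous_on_sheet_map[OF x0]
    local_homeomorphism_imp_continuous_on[OF local_homeo]
  by (force simp: image_iff)

lemma evenly_covered_U: "evenly_covered f U"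
  unfolding evenly_covered_def
proof (intro exI conjI)
  let ?\<V> = "(\<lambda>x0. sheet_map x0 ` U) ` (f -` {y0})"
  show "\<Union>?\<V> = f -` U"
  proof
    show "\<Union>?\<V> \<subseteq> f -` U" using f_sheet_map by auto
    show "f -` U \<subseteq> \<Union>?\<V>"
    proof
      fix x assume "x \<in> f -` U"
      then obtain x0 where "f x0 = y0" "sheet_map x0 (f x) = x"
        using sheet_map_onto by blast
      then have "x \<in> sheet_map x0 ` U" "sheet_map x0 ` U \<in> ?\<V>"
        using \<open>x \<in> f -` U\<close> by (auto intro: rev_image_eqI)
      then show "x \<in> \<Union>?\<V>" by blast
    qed
  qed
  show "\<forall>V\<in>?\<V>. open V" using open_sheet by auto
  show "pairwise disjnt ?\<V>"
    unfolding pairwise_def disjnt_def using sheet_map_inj by blast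
  show "\<forall>V\<in>?\<V>. \<exists>q. homeomorphism V U f q" using homeomorphism_sheet by blast
qed

lemma preimage_nonempty_imp_base_in_range: "f x \<in> U \<Longrightarrow> y0 \<in> range f"
  using sheet_map_onto[of "f x" x] by (metis rangeI)

lemma base_in_range_imp_subset_range: "y0 \<in> range f \<Longrightarrow> U \<subseteq> range f"
  using f_sheet_map by (metis imageE rangeI subsetI)

end

lemma (in expanding_local_homeomorphism) covering_space_if_locally_R_contractible:
  assumes "connected (UNIV :: 'b set)" and "locally_R_contractible (UNIV :: 'b set)"
  shows "covering_space UNIV f UNIV"
proof -
  have local: "\<exists>U. open U \<and> y \<in> U \<and> evenly_covered f U \<and> (U \<inter> range f \<noteq> {} \<longrightarrow> y \<in> range f) \<and>
                  (y \<in> range f \<longrightarrow> U \<subseteq> range f)" for y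
  proof -
    obtain U H where "openin (top_of_set UNIV) U" "y \<in> U" and H: "continuous_on (U \<times> {0..1}) H"
      "\<forall>z\<in>U. H (z, 0) = y \<and> H (z, 1) = z" "\<forall>z\<in>U. rectifiable_path (\<lambda>t. H (z, t))"
      using assms(2)[unfolded locally_R_contractible_def, rule_format, OF UNIV_I, of y] by blast
    then have "open U" by simp
    interpret rectifiable_contraction f \<beta> U H y
      by unfold_locales (use \<open>open U\<close> H in auto)
    have "U \<inter> range f \<noteq> {} \<longrightarrow> y \<in> range f" using preimage_nonempty_imp_base_in_range by blast
    then show ?thesis
      using evenly_covered_U base_in_range_imp_subset_range \<open>open U\<close> \<open>y \<in> U\<close>
      by (intro exI[of _ U]) simp
  qed
  have "range f = UNIV"
  proof (rule range_eq_UNIV_if_connected[OF assms(1)])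
    fix y
    obtain U where "open U" "y \<in> U" "U \<inter> range f \<noteq> {} \<longrightarrow> y \<in> range f" "y \<in> range f \<longrightarrow> U \<subseteq> range f"
      using local[of y] by (elim exE conjE)
    then show "\<exists>U. open U \<and> y \<in> U \<and> (U \<inter> range f \<noteq> {} \<longrightarrow> y \<in> range f) \<and> (y \<in> range f \<longrightarrow> U \<subseteq> range f)"
      by (intro exI[of _ U]) simp
  qed
  then show ?thesis
  proof (rule covering_space_if_evenly_covered[OF local_homeomorphism_imp_continuous_on[OF local_homeo]])
    fix y
    obtain U where "open U" "y \<in> U" "evenly_covered f U" using local[of y] by (elim exE conjE)
    then show "\<exists>U. open U \<and> y \<in> U \<and> evenly_covered f U" by (intro exI[of _ U]) simp
  qed
qed

theorem mainTheorem11: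
  fixes f :: "'a::metric_space \<Rightarrow> 'b::metric_space" and \<alpha> :: real
  assumes "local_homeomorphism f"
    and "complete (UNIV :: 'a set)"
    and "\<And>x::'a. x islimpt (UNIV :: 'a set)"
    and "path_connected (UNIV :: 'b set)"
    and "locally_R_contractible (UNIV :: 'b set)"
    and "\<alpha> > 0"
    and "\<And>x. lower_scalar_deriv f x \<ge> ereal \<alpha>"
  shows "covering_space (UNIV :: 'a set) f (UNIV :: 'b set)"
proof -
  (* Any expansion factor below \<alpha> would do. *)
  interpret expanding_local_homeomorphism f "\<alpha> / 2"
    using assms(1,2,6) lower_scalar_deriv_imp_locally_expanding[OF assms(7), of "\<alpha> / 2"]
    by unfold_locales simp_all
  show ?thesis
    using covering_space_if_locally_R_contractible path_connected_imp_connected assms(4,5) by blast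
qed

end
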